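(* If $M$ is a simple rank-$r$ matroid that has no $3$-element circuit and no $3$-claw, then $|E(M)| \ge 2^{r-1}$. If equality holds, then $M \cong \mathrm{AG}(r-1,2)$.
   Context: A claw of a matroid $M$ is a set that is both a flat and an independent set of $M$; a $k$-claw is a claw of size $k$. $\mathrm{AG}(r-1,2)$ is the rank-$r$ binary affine geometry, obtained from the binary projective geometry $\mathrm{PG}(r-1,2)$ by deleting a hyperplane. *)

theory Defs
  imports Main "HOL-Library.Z2"
begin

definition matroid :: "'a set \<Rightarrow> ('a set \<Rightarrow> bool) \<Rightarrow> bool" where
  "matroid E indep \<longleftrightarrow>
     finite E \<and> indep {} \<and>
     (\<forall>X. indep X \<longrightarrow> X \<subseteq> E) \<and>
     (\<forall>X Y. indep X \<and> Y \<subseteq> X \<longrightarrow> indep Y) \<and>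
     (\<forall>X Y. indep X \<and> indep Y \<and> card X < card Y \<longrightarrow>
        (\<exists>y\<in>Y - X. indep (insert y X)))"

definition mrank :: "('a set \<Rightarrow> bool) \<Rightarrow> 'a set \<Rightarrow> nat" where
  "mrank indep X = Max {card I | I. I \<subseteq> X \<and> indep I}"

definition mclosure :: "'a set \<Rightarrow> ('a set \<Rightarrow> bool) \<Rightarrow> 'a set \<Rightarrow> 'a set" where
  "mclosure E indep X = {e \<in> E. mrank indep (insert e X) = mrank indep X}"

definition flat :: "'a set \<Rightarrow> ('a set \<Rightarrow> bool) \<Rightarrow> 'a set \<Rightarrow> bool" where
  "flat E indep X \<longleftrightarrow> X \<subseteq> E \<and> mclosure E indep X = X"

definition circuit :: "'a set \<Rightarrow> ('a set \<Rightarrow> bool) \<Rightarrow> 'a set \<Rightarrow> bool" where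
  "circuit E indep C \<longleftrightarrow> C \<subseteq> E \<and> \<not> indep C \<and> (\<forall>x\<in>C. indep (C - {x}))"

definition simple_matroid :: "'a set \<Rightarrow> ('a set \<Rightarrow> bool) \<Rightarrow> bool" where
  "simple_matroid E indep \<longleftrightarrow> (\<forall>C. circuit E indep C \<longrightarrow> card C \<ge> 3)"

definition claw :: "'a set \<Rightarrow> ('a set \<Rightarrow> bool) \<Rightarrow> 'a set \<Rightarrow> bool" where
  "claw E indep X \<longleftrightarrow> flat E indep X \<and> indep X"

definition matroid_iso ::
  "'a set \<Rightarrow> ('a set \<Rightarrow> bool) \<Rightarrow> 'b set \<Rightarrow> ('b set \<Rightarrow> bool) \<Rightarrow> bool" where
  "matroid_iso E1 indep1 E2 indep2 \<longleftrightarrow>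
     (\<exists>f. bij_betw f E1 E2 \<and> (\<forall>X \<subseteq> E1. indep1 X \<longleftrightarrow> indep2 (f ` X)))"

text \<open>Vectors of GF(2)^r are modelled as functions nat => bit vanishing outside {0..<r}.
  Linear independence over GF(2).\<close>
definition gf2_lin_indep :: "(nat \<Rightarrow> bit) set \<Rightarrow> bool" where
  "gf2_lin_indep S \<longleftrightarrow> finite S \<and>
     (\<forall>c :: (nat \<Rightarrow> bit) \<Rightarrow> bit.
        (\<forall>i. (\<Sum>v\<in>S. c v * v i) = 0) \<longrightarrow> (\<forall>v\<in>S. c v = 0))"

text \<open>AG(r-1,2): PG(r-1,2) (nonzero vectors of GF(2)^r, as a vector matroid) with the
  hyperplane {x. x 0 = 0} deleted, i.e. the vectors with first coordinate 1.\<close>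
definition AG_ground :: "nat \<Rightarrow> (nat \<Rightarrow> bit) set" where
  "AG_ground r = {v. v 0 = 1 \<and> (\<forall>i\<ge>r. v i = 0)}"

definition AG_indep :: "nat \<Rightarrow> (nat \<Rightarrow> bit) set \<Rightarrow> bool" where
  "AG_indep r X \<longleftrightarrow> X \<subseteq> AG_ground r \<and> gf2_lin_indep X"

end

(*
  For distinct a, b, c in E the independent set {a, b, c} is not a flat, so its closure contains
  a fourth point t(a, b, c). If F is a flat, e is outside F and f0 is in F, then f |-> t(e, f0, f)
  maps F - {f0} injectively into cl(F + e) - (F + e); so cl(F + e) has at least 2|F| points, and
  climbing from a single point up to E gives |E| >= 2^(r-1).

  In the equality case every flat of rank k has exactly 2^(k-1) points. Hence planes have four
  points, t(a, b, t(a, b, c)) = c, and for every hyperplane H the point t(a, b, c) lies off H iff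
  an odd number of a, b, c do. Fix a basis b_0, ..., b_(r-1) and let H_i be the hyperplane spanned
  by the basis without b_i. The map x |-> (1, [x off H_1], ..., [x off H_(r-1)]) turns t into
  (u, v, w) |-> u + v + w. The closure of a set under t is its matroid closure, and its closure
  under u + v + w is its affine hull over GF(2), so the map is an isomorphism onto AG(r-1, 2).
*)
theory Submission
  imports Defs
begin

section \<open>Rank and closure\<close>

locale finite_matroid =
  fixes E :: "'a set" and indep :: "'a set \<Rightarrow> bool"
  assumes matroid: "matroid E indep"
begin

abbreviation rank :: "'a set \<Rightarrow> nat" where "rank \<equiv> mrank indep"
abbreviation cl :: "'a set \<Rightarrow> 'a set" where "cl \<equiv> mclosure E indep"

lemma finite_E: "finite E"
  and indep_empty: "indep {}"
  and indep_subset_E: "indep X \<Longrightarrow> X \<subseteq> E"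
  and indep_subset: "indep X \<Longrightarrow> Y \<subseteq> X \<Longrightarrow> indep Y"
  and indep_augment: "indep X \<Longrightarrow> indep Y \<Longrightarrow> card X < card Y \<Longrightarrow> \<exists>y\<in>Y - X. indep (insert y X)"
  using matroid unfolding matroid_def by blast+

lemma indep_finite: "indep X \<Longrightarrow> finite X"
  using indep_subset_E finite_E finite_subset by blast

lemma finite_indep_cards: "finite {card I | I. I \<subseteq> X \<and> indep I}"
proof (rule finite_subset)
  show "{card I | I. I \<subseteq> X \<and> indep I} \<subseteq> {..card E}"
    using indep_subset_E finite_E card_mono by fastforce
qed simp

lemma card_le_rank: "indep I \<Longrightarrow> I \<subseteq> X \<Longrightarrow> card I \<le> rank X"
  unfolding mrank_def using finite_indep_cards by (intro Max_ge) auto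

definition basis_of :: "'a set \<Rightarrow> 'a set \<Rightarrow> bool" where
  "basis_of X I \<longleftrightarrow> I \<subseteq> X \<and> indep I \<and> card I = rank X"

lemma basis_of_exists: "\<exists>I. basis_of X I"
proof -
  have "rank X \<in> {card I | I. I \<subseteq> X \<and> indep I}"
    unfolding mrank_def using finite_indep_cards indep_empty by (intro Max_in) auto
  then show ?thesis unfolding basis_of_def by auto
qed

lemma rank_indep: "indep I \<Longrightarrow> rank I = card I"
proof -
  assume "indep I"
  obtain J where J: "J \<subseteq> I" "card J = rank I" using basis_of_exists[of I] unfolding basis_of_def by blast
  then have "rank I \<le> card I" using card_mono[OF indep_finite[OF \<open>indep I\<close>] J(1)] by simp
  with card_le_rank[OF \<open>indep I\<close> order_refl] show ?thesis by simp
qed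

lemma basis_of_indep: "indep I \<Longrightarrow> basis_of I I"
  unfolding basis_of_def by (simp add: rank_indep)

lemma rank_mono: "X \<subseteq> Y \<Longrightarrow> rank X \<le> rank Y"
proof -
  assume "X \<subseteq> Y"
  obtain I where "basis_of X I" using basis_of_exists[of X] by blast
  then show ?thesis using card_le_rank[of I Y] \<open>X \<subseteq> Y\<close> unfolding basis_of_def by auto
qed

lemma basis_of_extend:
  assumes "indep I" "I \<subseteq> X"
  shows "\<exists>J. I \<subseteq> J \<and> basis_of X J"
  using assms
proof (induction "rank X - card I" arbitrary: I rule: less_induct)
  case less
  show ?case
  proof (cases "card I < rank X")
    case True
    obtain J where J: "basis_of X J" using basis_of_exists[of X] by blast
    then obtain y where y: "y \<in> J - I" "indep (insert y I)"
      using indep_augment[OF less.prems(1), of J] True unfolding basis_of_def by auto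
    have "card (insert y I) = Suc (card I)" using y indep_finite less.prems by auto
    then have "rank X - card (insert y I) < rank X - card I" using True by simp
    moreover have "insert y I \<subseteq> X" using y J less.prems unfolding basis_of_def by auto
    ultimately show ?thesis using less.hyps[of "insert y I"] y by blast
  next
    case False
    then show ?thesis using card_le_rank[OF less.prems] less.prems unfolding basis_of_def
      by (intro exI[of _ I]) simp
  qed
qed

lemma basis_of_insert_rank_increase:
  assumes I: "basis_of X I" and less: "rank X < rank (insert e X)"
  shows "e \<notin> I \<and> indep (insert e I)"
proof -
  have I': "I \<subseteq> X" "indep I" "card I = rank X" using I unfolding basis_of_def by auto
  obtain J where J: "I \<subseteq> J" "basis_of (insert e X) J"
    using basis_of_extend[OF I'(2), of "insert e X"] I' by blast
  have "J \<subseteq> insert e I"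
  proof
    fix y assume "y \<in> J"
    show "y \<in> insert e I"
    proof (rule ccontr)
      assume "y \<notin> insert e I"
      then have "insert y I \<subseteq> X" "indep (insert y I)"
        using \<open>y \<in> J\<close> J I' indep_subset[of J "insert y I"] unfolding basis_of_def by auto
      then show False
        using card_le_rank[of "insert y I" X] I' indep_finite \<open>y \<notin> insert e I\<close> by simp
    qed
  qed
  moreover have "J \<noteq> I" using J less I' unfolding basis_of_def by auto
  ultimately have "e \<notin> I" "J = insert e I" using J(1) by auto
  then show ?thesis using J(2) unfolding basis_of_def by simp
qed

lemma in_closure_iff_basis:
  assumes "basis_of X I"
  shows "e \<in> cl X \<longleftrightarrow> e \<in> E \<and> (e \<in> I \<or> \<not> indep (insert e I))"
proof -
  have I: "I \<subseteq> X" "indep I" "card I = rank X" using assms unfolding basis_of_def by auto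
  have "rank X \<le> rank (insert e X)" by (rule rank_mono) auto
  moreover have "e \<notin> I \<Longrightarrow> indep (insert e I) \<Longrightarrow> rank X < rank (insert e X)"
    using card_le_rank[of "insert e I" "insert e X"] I indep_finite by fastforce
  ultimately have "rank (insert e X) = rank X \<longleftrightarrow> e \<in> I \<or> \<not> indep (insert e I)"
    using basis_of_insert_rank_increase[OF assms, of e] by fastforce
  then show ?thesis unfolding mclosure_def by simp
qed

lemma closure_subset_E: "cl X \<subseteq> E"
  unfolding mclosure_def by auto

lemma subset_closure: "X \<subseteq> E \<Longrightarrow> X \<subseteq> cl X"
  unfolding mclosure_def by (auto simp: insert_absorb)

lemma in_closure_indep_iff:
  assumes "indep I" "e \<in> E" "e \<notin> I"
  shows "e \<in> cl I \<longleftrightarrow> \<not> indep (insert e I)"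
  using in_closure_iff_basis[OF basis_of_indep[OF assms(1)]] assms by simp

lemma closure_basis_of: "basis_of X I \<Longrightarrow> cl I = cl X"
  using in_closure_iff_basis[of X I] in_closure_iff_basis[OF basis_of_indep, of I]
  unfolding basis_of_def by blast

lemma closure_mono:
  assumes "X \<subseteq> Y"
  shows "cl X \<subseteq> cl Y"
proof
  fix e assume e: "e \<in> cl X"
  obtain I where I: "basis_of X I" using basis_of_exists[of X] by blast
  then obtain J where J: "I \<subseteq> J" "basis_of Y J"
    using basis_of_extend[of I Y] assms unfolding basis_of_def by auto
  have "\<not> indep (insert e I) \<Longrightarrow> \<not> indep (insert e J)"
    using J(1) indep_subset[of "insert e J" "insert e I"] by blast
  then show "e \<in> cl Y"
    using e J in_closure_iff_basis[OF I] in_closure_iff_basis[OF J(2)] by blast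
qed

lemma basis_of_closure: "basis_of X I \<Longrightarrow> basis_of (cl X) I"
proof -
  assume I: "basis_of X I"
  then have "I \<subseteq> E" unfolding basis_of_def using indep_subset_E by blast
  then have "I \<subseteq> cl X" using closure_basis_of[OF I] subset_closure[of I] by simp
  then obtain J where J: "I \<subseteq> J" "basis_of (cl X) J"
    using basis_of_extend[of I "cl X"] I unfolding basis_of_def by blast
  have "J \<subseteq> I"
  proof
    fix y assume "y \<in> J"
    then have "y \<in> cl X" "insert y I \<subseteq> J" using J unfolding basis_of_def by auto
    then have "indep (insert y I)" using J(2) indep_subset unfolding basis_of_def by blast
    then show "y \<in> I" using in_closure_iff_basis[OF I, of y] \<open>y \<in> cl X\<close> by simp
  qed
  then have "J = I" using J(1) by (rule subset_antisym)
  then show ?thesis using J(2) by simp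
qed

lemma rank_closure: "rank (cl X) = rank X"
proof -
  obtain I where "basis_of X I" using basis_of_exists[of X] by blast
  then show ?thesis using basis_of_closure unfolding basis_of_def by simp
qed

lemma closure_idem: "cl (cl X) = cl X"
proof -
  obtain I where "basis_of X I" using basis_of_exists[of X] by blast
  then show ?thesis using closure_basis_of[of X I] closure_basis_of[of "cl X" I] basis_of_closure by simp
qed

lemma flat_closure: "flat E indep (cl X)"
  unfolding flat_def using closure_subset_E closure_idem by simp

lemma flat_E: "flat E indep E"
  unfolding flat_def using closure_subset_E subset_closure[of E] by blast

lemma closure_flat: "flat E indep F \<Longrightarrow> cl F = F"
  and flat_subset_E: "flat E indep F \<Longrightarrow> F \<subseteq> E"
  unfolding flat_def by simp_all

lemma rank_insert_notin_closure:
  assumes "e \<in> E" "e \<notin> cl X"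
  shows "rank (insert e X) = Suc (rank X)"
proof (rule antisym)
  obtain J where J: "J \<subseteq> insert e X" "indep J" "card J = rank (insert e X)"
    using basis_of_exists[of "insert e X"] unfolding basis_of_def by blast
  then have "card (J - {e}) \<le> rank X"
    using card_le_rank[of "J - {e}" X] indep_subset[of J] by auto
  moreover have "card J \<le> Suc (card (J - {e}))"
    using indep_finite[OF J(2)] by (cases "e \<in> J") (auto simp: card_Suc_Diff1)
  ultimately show "rank (insert e X) \<le> Suc (rank X)" using J(3) by simp
  obtain I where I: "basis_of X I" using basis_of_exists[of X] by blast
  then have "e \<notin> I" "indep (insert e I)" using assms in_closure_iff_basis by blast+
  then show "Suc (rank X) \<le> rank (insert e X)"
    using I card_le_rank[of "insert e I" "insert e X"] indep_finite unfolding basis_of_def by auto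
qed

lemma indep_iff_notin_closure:
  assumes "X \<subseteq> E"
  shows "indep X \<longleftrightarrow> (\<forall>x\<in>X. x \<notin> cl (X - {x}))"
proof
  assume "indep X"
  show "\<forall>x\<in>X. x \<notin> cl (X - {x})"
  proof
    fix x assume "x \<in> X"
    then have "insert x (X - {x}) = X" by auto
    then show "x \<notin> cl (X - {x})"
      using in_closure_indep_iff[of "X - {x}" x] indep_subset[OF \<open>indep X\<close>] \<open>indep X\<close> \<open>x \<in> X\<close> assms
      by auto
  qed
next
  assume no_dependence: "\<forall>x\<in>X. x \<notin> cl (X - {x})"
  obtain I where I: "basis_of X I" using basis_of_exists[of X] by blast
  show "indep X"
  proof (rule ccontr)
    assume "\<not> indep X"
    then have "I \<noteq> X" using I unfolding basis_of_def by auto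
    then obtain x where x: "x \<in> X" "x \<notin> I" using I unfolding basis_of_def by auto
    then have "x \<in> cl X" using assms subset_closure by blast
    then have "x \<in> cl I" using closure_basis_of[OF I] by simp
    moreover have "cl I \<subseteq> cl (X - {x})" using I x unfolding basis_of_def by (intro closure_mono) auto
    ultimately show False using no_dependence x by blast
  qed
qed

lemma flat_eq_if_rank_le:
  assumes "flat E indep F" "F \<subseteq> G" "G \<subseteq> E" "rank G \<le> rank F"
  shows "G = F"
proof -
  obtain I where I: "basis_of F I" using basis_of_exists[of F] by blast
  then have "basis_of G I" using assms rank_mono[of F G] unfolding basis_of_def by auto
  have "G \<subseteq> cl G" using subset_closure[OF assms(3)] .
  also have "\<dots> = cl F" using closure_basis_of[OF \<open>basis_of G I\<close>] closure_basis_of[OF I] by simp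
  finally show ?thesis using closure_flat[OF assms(1)] assms(2) by blast
qed

lemma closure_insert_closure:
  assumes "X \<subseteq> E" "e \<in> E"
  shows "cl (insert e (cl X)) = cl (insert e X)"
proof
  have "insert e (cl X) \<subseteq> cl (insert e X)"
    using closure_mono[of X "insert e X"] subset_closure[of "insert e X"] assms by auto
  then show "cl (insert e (cl X)) \<subseteq> cl (insert e X)"
    using closure_mono[of "insert e (cl X)" "cl (insert e X)"] closure_idem by simp
  show "cl (insert e X) \<subseteq> cl (insert e (cl X))"
    using subset_closure[OF assms(1)] by (intro closure_mono) auto
qed

lemma dependent_contains_circuit:
  "finite D \<Longrightarrow> D \<subseteq> E \<Longrightarrow> \<not> indep D \<Longrightarrow> \<exists>C\<subseteq>D. circuit E indep C"
proof (induction "card D" arbitrary: D rule: less_induct)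
  case less
  show ?case
  proof (cases "\<forall>x\<in>D. indep (D - {x})")
    case True
    then show ?thesis using less.prems unfolding circuit_def by blast
  next
    case False
    then obtain x where x: "x \<in> D" "\<not> indep (D - {x})" by blast
    have "card (D - {x}) < card D" using card_Diff1_less[OF less.prems(1) x(1)] .
    moreover have "finite (D - {x})" "D - {x} \<subseteq> E" using less.prems by auto
    ultimately obtain C where "C \<subseteq> D - {x}" "circuit E indep C" using less.hyps x(2) by blast
    then show ?thesis by blast
  qed
qed

lemma indep_if_circuits_larger:
  assumes "\<And>C. circuit E indep C \<Longrightarrow> k < card C" "X \<subseteq> E" "card X \<le> k"
  shows "indep X"
proof (rule ccontr)
  assume "\<not> indep X"
  moreover have "finite X" using assms(2) finite_E finite_subset by blast
  ultimately obtain C where "C \<subseteq> X" "circuit E indep C"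
    using dependent_contains_circuit[of X] assms(2) by blast
  then have "k < card C" "card C \<le> card X" using assms(1) card_mono[OF \<open>finite X\<close>] by auto
  then show False using assms(3) by linarith
qed

end

section \<open>Matroids without small circuits and without 3-claws\<close>

locale claw_free_matroid = finite_matroid +
  assumes indep_small: "X \<subseteq> E \<Longrightarrow> card X \<le> 3 \<Longrightarrow> indep X"
    and no_3claw: "claw E indep X \<Longrightarrow> card X \<noteq> 3"
begin

lemma closure_empty: "cl {} = {}"
proof -
  have "e \<notin> cl {}" if "e \<in> E" for e
    using in_closure_indep_iff[OF indep_empty that] indep_small[of "{e}"] that by simp
  then show ?thesis using closure_subset_E by blast
qed

lemma closure_singleton: "e \<in> E \<Longrightarrow> cl {e} = {e}"
proof -
  assume e: "e \<in> E"
  have "x \<notin> cl {e}" if "x \<in> E" "x \<noteq> e" for x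
    using in_closure_indep_iff[of "{e}" x] indep_small[of "{x, e}"] indep_small[of "{e}"] e that
    by (simp add: card_insert_if)
  then show ?thesis using closure_subset_E subset_closure[of "{e}"] e by blast
qed

lemma flat_singleton: "e \<in> E \<Longrightarrow> flat E indep {e}"
  using flat_closure[of "{e}"] closure_singleton by simp

lemma rank_singleton: "e \<in> E \<Longrightarrow> rank {e} = 1"
  using rank_indep indep_small[of "{e}"] by simp

lemma rank_pos_if_nonempty:
  assumes "F \<subseteq> E" "F \<noteq> {}"
  shows "1 \<le> rank F"
proof -
  obtain e where "e \<in> F" using assms(2) by blast
  then show ?thesis using rank_mono[of "{e}" F] rank_singleton assms(1) by auto
qed

lemma indep_triple: "{a, b, c} \<subseteq> E \<Longrightarrow> indep {a, b, c}"
  using indep_small[of "{a, b, c}"] by (simp add: card_insert_if)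

lemma rank_closure_triple:
  assumes "{a, b, c} \<subseteq> E" "distinct [a, b, c]"
  shows "rank (cl {a, b, c}) = 3"
  using rank_closure rank_indep[OF indep_triple[OF assms(1)]] assms(2) by simp

text \<open>Meaningful only for distinct \<open>a, b, c \<in> E\<close>: then \<open>{a, b, c}\<close> is independent but not a
  claw, so its closure has further points; in the extremal case there is exactly one.\<close>
definition fourth_point :: "'a \<Rightarrow> 'a \<Rightarrow> 'a \<Rightarrow> 'a" where
  "fourth_point a b c = (SOME w. w \<in> cl {a, b, c} - {a, b, c})"

lemma fourth_point_mem:
  assumes "{a, b, c} \<subseteq> E" "distinct [a, b, c]"
  shows "fourth_point a b c \<in> cl {a, b, c} - {a, b, c}"
proof -
  have "\<not> claw E indep {a, b, c}" using no_3claw assms(2) by force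
  then have "cl {a, b, c} \<noteq> {a, b, c}"
    using indep_triple[OF assms(1)] assms(1) unfolding claw_def flat_def by blast
  then have "\<exists>w. w \<in> cl {a, b, c} - {a, b, c}"
    using subset_closure[OF assms(1)] by blast
  then show ?thesis unfolding fourth_point_def by (rule someI_ex)
qed

lemma fourth_point_commute:
  "fourth_point a b c = fourth_point b a c" "fourth_point a b c = fourth_point a c b"
  unfolding fourth_point_def by (simp_all add: insert_commute)

lemma closure_triple_eq:
  assumes "{a, b, c} \<subseteq> E" "distinct [a, b, c]"
    and "{x, y, z} \<subseteq> cl {a, b, c}" "distinct [x, y, z]"
  shows "cl {x, y, z} = cl {a, b, c}"
proof -
  have "{x, y, z} \<subseteq> E" using assms(3) closure_subset_E by blast
  then have "basis_of (cl {a, b, c}) {x, y, z}"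
    using indep_triple rank_closure_triple[OF assms(1,2)] assms(3,4) unfolding basis_of_def by simp
  then show ?thesis using closure_basis_of closure_idem by metis
qed

lemma in_closure_fourth_point:
  assumes "{a, b, c} \<subseteq> E" "distinct [a, b, c]"
  shows "a \<in> cl {b, c, fourth_point a b c}"
proof -
  have "cl {b, c, fourth_point a b c} = cl {a, b, c}"
    using fourth_point_mem[OF assms] subset_closure[OF assms(1)] assms
    by (intro closure_triple_eq) auto
  then show ?thesis using subset_closure[OF assms(1)] by auto
qed

lemma fourth_point_in_flat:
  assumes "flat E indep F" "{a, b, c} \<subseteq> F" "distinct [a, b, c]"
  shows "fourth_point a b c \<in> F"
  using fourth_point_mem[of a b c] closure_mono[OF assms(2)] closure_flat[OF assms(1)]
    flat_subset_E[OF assms(1)] assms(2,3) by auto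

lemma fourth_point_notin_flat:
  assumes "flat E indep F" "a \<in> E - F" "{b, c} \<subseteq> F" "b \<noteq> c"
  shows "fourth_point a b c \<notin> F"
proof
  assume "fourth_point a b c \<in> F"
  then have "cl {b, c, fourth_point a b c} \<subseteq> F"
    using closure_mono[of "{b, c, fourth_point a b c}" F] closure_flat[OF assms(1)] assms(3) by auto
  then show False
    using in_closure_fourth_point[of a b c] flat_subset_E[OF assms(1)] assms by auto
qed

definition doubling :: "'a set \<Rightarrow> 'a \<Rightarrow> 'a \<Rightarrow> 'a set" where
  "doubling F e f0 = insert e (F \<union> fourth_point e f0 ` (F - {f0}))"

context
  fixes F e f0
  assumes F: "flat E indep F" and f0: "f0 \<in> F" and e: "e \<in> E - F"
begin

lemma triple_e_f0:
  "f \<in> F - {f0} \<Longrightarrow> {e, f0, f} \<subseteq> E \<and> distinct [e, f0, f]"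
  using flat_subset_E[OF F] f0 e by auto

lemma inj_on_fourth_point: "inj_on (fourth_point e f0) (F - {f0})"
proof
  fix f g assume f: "f \<in> F - {f0}" and g: "g \<in> F - {f0}"
    and same: "fourth_point e f0 f = fourth_point e f0 g"
  show "f = g"
  proof (rule ccontr)
    assume "f \<noteq> g"
    have "cl {e, f0, fourth_point e f0 h} = cl {e, f0, h}" if "h \<in> F - {f0}" for h
      using triple_e_f0[OF that] fourth_point_mem[of e f0 h] subset_closure[of "{e, f0, h}"]
      by (intro closure_triple_eq) auto
    then have "cl {e, f0, g} = cl {e, f0, f}" using f g same by metis
    then have "g \<in> cl {e, f0, f}" using subset_closure[of "{e, f0, g}"] triple_e_f0[OF g] by auto
    then have "cl {f0, f, g} = cl {e, f0, f}"
      using triple_e_f0[OF f] subset_closure[of "{e, f0, f}"] f g \<open>f \<noteq> g\<close>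
      by (intro closure_triple_eq) auto
    then have "e \<in> cl {f0, f, g}" using subset_closure[of "{e, f0, f}"] triple_e_f0[OF f] by auto
    moreover have "cl {f0, f, g} \<subseteq> F"
      using closure_mono[of "{f0, f, g}" F] closure_flat[OF F] f0 f g by auto
    ultimately show False using e by blast
  qed
qed

lemma doubling_subset_closure: "doubling F e f0 \<subseteq> cl (insert e F)"
proof -
  have "fourth_point e f0 f \<in> cl (insert e F)" if "f \<in> F - {f0}" for f
    using fourth_point_mem[of e f0 f] triple_e_f0[OF that] f0 that
      closure_mono[of "{e, f0, f}" "insert e F"] by auto
  then show ?thesis
    unfolding doubling_def using subset_closure[of "insert e F"] flat_subset_E[OF F] e by auto
qed

lemma card_doubling: "card (doubling F e f0) = 2 * card F"
proof -
  have fin: "finite F" using flat_subset_E[OF F] finite_E finite_subset by blast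
  have "x \<notin> insert e F" if x: "x \<in> fourth_point e f0 ` (F - {f0})" for x
  proof -
    obtain f where f: "f \<in> F - {f0}" "x = fourth_point e f0 f" using x by blast
    have "x \<noteq> e" using fourth_point_mem[of e f0 f] triple_e_f0[OF f(1)] f(2) by auto
    moreover have "x \<notin> F" using fourth_point_notin_flat[OF F e, of f0 f] f0 f by auto
    ultimately show ?thesis by simp
  qed
  then have "insert e F \<inter> fourth_point e f0 ` (F - {f0}) = {}" by blast
  then have "card (doubling F e f0) = card (insert e F) + card (fourth_point e f0 ` (F - {f0}))"
    unfolding doubling_def using card_Un_disjoint[of "insert e F"] fin by simp
  also have "\<dots> = Suc (card F) + (card F - 1)"
    using card_image[OF inj_on_fourth_point] fin e f0 by simp
  finally show ?thesis using f0 fin card_gt_0_iff[of F] by auto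
qed

lemma card_closure_insert_ge: "2 * card F \<le> card (cl (insert e F))"
  using card_mono[OF finite_subset[OF closure_subset_E finite_E] doubling_subset_closure]
    card_doubling by simp

end

lemma card_flat_doubling:
  assumes "flat E indep F" "flat E indep G" "F \<subseteq> G"
  shows "2 ^ (rank G - rank F) * card F \<le> card G"
  using assms
proof (induction "rank G - rank F" arbitrary: F rule: less_induct)
  case less
  show ?case
  proof (cases "F = {} \<or> rank G \<le> rank F")
    case True
    then show ?thesis using flat_eq_if_rank_le[OF less.prems(1,3)] flat_subset_E[OF less.prems(2)]
      by auto
  next
    case False
    then obtain f0 where f0: "f0 \<in> F" by blast
    have "G \<noteq> F" using False by auto
    then obtain e where e: "e \<in> G - F" using less.prems(3) by blast
    have eE: "e \<in> E - F" using e flat_subset_E[OF less.prems(2)] by blast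
    define F' where "F' = cl (insert e F)"
    have flat_F': "flat E indep F'" unfolding F'_def by (rule flat_closure)
    have rank_F': "rank F' = Suc (rank F)"
      using rank_insert_notin_closure[of e F] closure_flat[OF less.prems(1)] eE rank_closure
      unfolding F'_def by simp
    have "F' \<subseteq> G"
      using closure_mono[of "insert e F" G] closure_flat[OF less.prems(2)] e less.prems(3)
      unfolding F'_def by auto
    have "rank F < rank G" using False by simp
    then have "rank G - rank F' < rank G - rank F" using rank_F' by linarith
    then have IH: "2 ^ (rank G - rank F') * card F' \<le> card G"
      using less.hyps flat_F' less.prems(2) \<open>F' \<subseteq> G\<close> by blast
    have "rank G - rank F = Suc (rank G - rank F')"
      using rank_F' rank_mono[OF \<open>F' \<subseteq> G\<close>] by simp
    then have "2 ^ (rank G - rank F) * card F = 2 ^ (rank G - rank F') * (2 * card F)" by simp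
    also have "\<dots> \<le> 2 ^ (rank G - rank F') * card F'"
      using card_closure_insert_ge[OF less.prems(1) f0 eE] unfolding F'_def by simp
    also have "\<dots> \<le> card G" by (rule IH)
    finally show ?thesis .
  qed
qed

lemma card_flat_ge:
  assumes "flat E indep F" "F \<noteq> {}"
  shows "2 ^ (rank F - 1) \<le> card F"
proof -
  obtain e where "e \<in> F" using assms(2) by blast
  then have "e \<in> E" using flat_subset_E[OF assms(1)] by blast
  then show ?thesis
    using card_flat_doubling[OF flat_singleton assms(1)] \<open>e \<in> F\<close> rank_singleton by simp
qed

end

section \<open>The extremal case\<close>

locale AG_extremal = claw_free_matroid +
  fixes r :: nat
  assumes rank_E: "rank E = r" and card_E: "card E = 2 ^ (r - 1)"
begin

lemma rank_E_pos: "1 \<le> r"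
proof -
  have "E \<noteq> {}" using card_E by auto
  then show ?thesis using rank_pos_if_nonempty[of E] rank_E by simp
qed

lemma card_flat:
  assumes "flat E indep F" "F \<noteq> {}"
  shows "card F = 2 ^ (rank F - 1)"
proof -
  have "1 \<le> rank F" "rank F \<le> r"
    using rank_pos_if_nonempty rank_mono flat_subset_E[OF assms(1)] assms(2) rank_E by auto
  then have "2 ^ (r - rank F) * card F \<le> 2 ^ (r - rank F) * 2 ^ (rank F - 1)"
    using card_flat_doubling[OF assms(1) flat_E flat_subset_E[OF assms(1)]] card_E rank_E
    by (simp flip: power_add)
  then show ?thesis using card_flat_ge[OF assms] by simp
qed

lemma closure_triple:
  assumes "{a, b, c} \<subseteq> E" "distinct [a, b, c]"
  shows "cl {a, b, c} = {a, b, c, fourth_point a b c}"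
proof -
  have "cl {a, b, c} \<noteq> {}" using subset_closure[OF assms(1)] by auto
  then have "card (cl {a, b, c}) = 4"
    using card_flat[OF flat_closure[of "{a, b, c}"]] rank_closure_triple[OF assms] by simp
  moreover have "card {a, b, c, fourth_point a b c} = 4"
    using fourth_point_mem[OF assms] assms(2) by auto
  moreover have sub: "{a, b, c, fourth_point a b c} \<subseteq> cl {a, b, c}"
    using fourth_point_mem[OF assms] subset_closure[OF assms(1)] by auto
  ultimately show ?thesis
    using card_subset_eq[OF finite_subset[OF closure_subset_E finite_E] sub] by simp
qed

lemma fourth_point_fourth_point:
  assumes "{a, b, c} \<subseteq> E" "distinct [a, b, c]"
  shows "fourth_point a b (fourth_point a b c) = c"
proof -
  let ?d = "fourth_point a b c"
  have d: "?d \<in> cl {a, b, c} - {a, b, c}" using fourth_point_mem[OF assms] .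
  then have triangle: "{a, b, ?d} \<subseteq> E" "distinct [a, b, ?d]"
    using assms closure_subset_E[of "{a, b, c}"] by auto
  have "{a, b, ?d} \<subseteq> cl {a, b, c}" using d subset_closure[OF assms(1)] by auto
  then have "cl {a, b, ?d} = cl {a, b, c}" using closure_triple_eq[OF assms _ triangle(2)] by simp
  also have "\<dots> = {a, b, c, ?d}" by (rule closure_triple[OF assms])
  finally show ?thesis using fourth_point_mem[OF triangle] by auto
qed

lemma closure_insert_flat:
  assumes "flat E indep F" "f0 \<in> F" "e \<in> E - F"
  shows "cl (insert e F) = doubling F e f0"
proof -
  have "F \<noteq> {}" using assms(2) by blast
  have "rank (cl (insert e F)) = Suc (rank F)"
    using rank_insert_notin_closure[of e F] closure_flat[OF assms(1)] assms(3) rank_closure by simp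
  moreover have "cl (insert e F) \<noteq> {}"
    using subset_closure[of "insert e F"] flat_subset_E[OF assms(1)] assms(3) by auto
  ultimately have "card (cl (insert e F)) = 2 ^ rank F"
    using card_flat[OF flat_closure[of "insert e F"]] by simp
  also have "\<dots> = 2 * card F"
    using card_flat[OF assms(1)] rank_pos_if_nonempty[OF flat_subset_E[OF assms(1)]] \<open>F \<noteq> {}\<close>
    by (cases "rank F") auto
  finally have "card (cl (insert e F)) = 2 * card F" .
  then show ?thesis
    using card_subset_eq[OF finite_subset[OF closure_subset_E finite_E]
        doubling_subset_closure[OF assms]] card_doubling[OF assms] by simp
qed

definition side :: "'a set \<Rightarrow> 'a \<Rightarrow> bit" where
  "side H x = (if x \<in> H then 0 else 1)"

context
  fixes H
  assumes H: "flat E indep H" and rank_H: "rank H = r - 1"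
begin

lemma closure_insert_hyperplane: "a \<in> E - H \<Longrightarrow> cl (insert a H) = E"
  using flat_eq_if_rank_le[OF flat_closure, of "insert a H" E]
    rank_insert_notin_closure[of a H] closure_flat[OF H] rank_closure rank_H rank_E rank_E_pos
    closure_subset_E by simp

lemma fourth_point_notin_hyperplane:
  assumes abc: "{a, b, c} \<subseteq> E - H" "distinct [a, b, c]"
  shows "fourth_point a b c \<notin> H"
proof
  let ?w = "fourth_point a b c"
  assume w: "?w \<in> H"
  have "b \<in> doubling H a ?w"
    using closure_insert_flat[OF H w, of a] closure_insert_hyperplane[of a] abc by auto
  then obtain h where h: "h \<in> H - {?w}" "b = fourth_point a ?w h"
    using abc unfolding doubling_def by auto
  have awh: "{a, ?w, h} \<subseteq> E" "distinct [a, ?w, h]"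
    using h w abc flat_subset_E[OF H] by auto
  have "fourth_point a ?w b = h" using fourth_point_fourth_point[OF awh] h(2) by simp
  moreover have "fourth_point a ?w b = c"
    using fourth_point_fourth_point[of a b c] fourth_point_commute(2)[of a b ?w] abc by auto
  ultimately show False using h abc by auto
qed

lemma fourth_point_in_hyperplane:
  assumes "{a, b} \<subseteq> E - H" "c \<in> H" "a \<noteq> b"
  shows "fourth_point a b c \<in> H"
proof (rule ccontr)
  let ?d = "fourth_point a b c"
  have abc: "{a, b, c} \<subseteq> E" "distinct [a, b, c]" using assms flat_subset_E[OF H] by auto
  assume "?d \<notin> H"
  moreover have "?d \<in> E - {a, b, c}" using fourth_point_mem[OF abc] closure_subset_E by blast
  ultimately have "fourth_point a b ?d \<notin> H"
    using assms by (intro fourth_point_notin_hyperplane) auto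
  then show False using fourth_point_fourth_point[OF abc] assms(2) by simp
qed

lemma side_fourth_point:
  assumes abc: "{a, b, c} \<subseteq> E" "distinct [a, b, c]"
  shows "side H (fourth_point a b c) = side H a + side H b + side H c"
proof -
  let ?d = "fourth_point a b c"
  have perm: "?d = fourth_point b a c" "?d = fourth_point a c b"
    "?d = fourth_point c a b" "?d = fourth_point b c a"
    using fourth_point_commute by metis+
  show ?thesis
  proof (cases "a \<in> H"; cases "b \<in> H"; cases "c \<in> H")
  qed (use abc perm fourth_point_in_flat[OF H, of a b c] fourth_point_notin_flat[OF H, of a b c]
      fourth_point_notin_flat[OF H, of b a c] fourth_point_notin_flat[OF H, of c a b]
      fourth_point_in_hyperplane[of a b c] fourth_point_in_hyperplane[of a c b]
      fourth_point_in_hyperplane[of b c a] fourth_point_notin_hyperplane[of a b c]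
      in \<open>auto simp: side_def\<close>)
qed

end

end

section \<open>Ternary closures and affine hulls over GF(2)\<close>

inductive_set ternary_closure :: "('b \<Rightarrow> 'b \<Rightarrow> 'b \<Rightarrow> 'b) \<Rightarrow> 'b set \<Rightarrow> 'b set"
  for T S where
  base: "x \<in> S \<Longrightarrow> x \<in> ternary_closure T S"
| step: "a \<in> ternary_closure T S \<Longrightarrow> b \<in> ternary_closure T S \<Longrightarrow> c \<in> ternary_closure T S \<Longrightarrow>
    distinct [a, b, c] \<Longrightarrow> T a b c \<in> ternary_closure T S"

lemma ternary_closure_mono:
  assumes "S \<subseteq> S'"
  shows "ternary_closure T S \<subseteq> ternary_closure T S'"
proof
  fix x assume "x \<in> ternary_closure T S"
  then show "x \<in> ternary_closure T S'"
    by induction (use assms in \<open>auto intro: ternary_closure.intros\<close>)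
qed

lemma image_ternary_closure:
  assumes hom: "\<And>a b c. a \<in> ternary_closure T S \<Longrightarrow> b \<in> ternary_closure T S \<Longrightarrow>
      c \<in> ternary_closure T S \<Longrightarrow> distinct [a, b, c] \<Longrightarrow> f (T a b c) = T' (f a) (f b) (f c)"
    and closed: "\<And>u v w. u \<in> ternary_closure T' (f ` S) \<Longrightarrow> v \<in> ternary_closure T' (f ` S) \<Longrightarrow>
      w \<in> ternary_closure T' (f ` S) \<Longrightarrow> T' u v w \<in> ternary_closure T' (f ` S)"
  shows "f ` ternary_closure T S = ternary_closure T' (f ` S)"
proof (intro equalityI subsetI)
  fix y assume "y \<in> f ` ternary_closure T S"
  then obtain x where x: "x \<in> ternary_closure T S" "y = f x" by blast
  have "f x \<in> ternary_closure T' (f ` S)" using x(1)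
  proof (induction rule: ternary_closure.induct)
    case (step a b c)
    then show ?case using hom closed by simp
  qed (auto intro: ternary_closure.base)
  then show "y \<in> ternary_closure T' (f ` S)" using x(2) by simp
next
  fix y assume "y \<in> ternary_closure T' (f ` S)"
  then show "y \<in> f ` ternary_closure T S"
  proof (induction rule: ternary_closure.induct)
    case (base y)
    then show ?case by (auto intro: ternary_closure.base)
  next
    case (step u v w)
    then obtain a b c where abc: "{a, b, c} \<subseteq> ternary_closure T S" "u = f a" "v = f b" "w = f c"
      by auto
    then have "distinct [a, b, c]" using step.hyps(4) by auto
    then have "T a b c \<in> ternary_closure T S" "T' u v w = f (T a b c)"
      using abc hom by (auto intro: ternary_closure.step)
    then show ?case by simp
  qed
qed

text \<open>Keep GF(2) arithmetic in ring form: the default xor/and normal forms obstruct sum manipulations.\<close>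
declare add_bit_eq_xor [simp del] mult_bit_eq_and [simp del]

definition bsum3 :: "('i \<Rightarrow> bit) \<Rightarrow> ('i \<Rightarrow> bit) \<Rightarrow> ('i \<Rightarrow> bit) \<Rightarrow> 'i \<Rightarrow> bit" where
  "bsum3 u v w = (\<lambda>i. u i + v i + w i)"

text \<open>Repeated arguments cancel, so the restriction to distinct arguments is harmless.\<close>
lemma bsum3_closed:
  assumes "u \<in> ternary_closure bsum3 Y" "v \<in> ternary_closure bsum3 Y" "w \<in> ternary_closure bsum3 Y"
  shows "bsum3 u v w \<in> ternary_closure bsum3 Y"
proof (cases "distinct [u, v, w]")
  case True
  then show ?thesis using assms by (rule ternary_closure.step[rotated 3])
next
  case False
  have "a + a + b = b" "a + b + a = b" "b + a + a = b" for a b :: bit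
    by (cases a; cases b; simp)+
  then have cancel: "bsum3 x x y = y" "bsum3 x y x = y" "bsum3 y x x = y" for x y :: "'i \<Rightarrow> bit"
    unfolding bsum3_def by (simp_all only:)
  show ?thesis using False assms by (auto simp: cancel)
qed

definition gf2_comb :: "('i \<Rightarrow> bit) set \<Rightarrow> (('i \<Rightarrow> bit) \<Rightarrow> bit) \<Rightarrow> 'i \<Rightarrow> bit" where
  "gf2_comb Y c = (\<lambda>i. \<Sum>v\<in>Y. c v * v i)"

definition gf2_affine_hull :: "('i \<Rightarrow> bit) set \<Rightarrow> ('i \<Rightarrow> bit) set" where
  "gf2_affine_hull Y = {gf2_comb Y c | c. (\<Sum>v\<in>Y. c v) = 1}"

lemma gf2_comb_remove:
  "finite Y \<Longrightarrow> y \<in> Y \<Longrightarrow> gf2_comb Y c i = c y * y i + gf2_comb (Y - {y}) c i"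
  unfolding gf2_comb_def by (rule sum.remove)

lemma ternary_closure_subset_gf2_affine_hull:
  assumes "finite Y"
  shows "ternary_closure bsum3 Y \<subseteq> gf2_affine_hull Y"
proof
  fix x assume "x \<in> ternary_closure bsum3 Y"
  then show "x \<in> gf2_affine_hull Y"
  proof (induction rule: ternary_closure.induct)
    case (base y)
    let ?c = "\<lambda>v. if v = y then 1 else 0 :: bit"
    have "?c v * v i = (if v = y then v i else 0)" for v i by simp
    then have "gf2_comb Y ?c = y" "(\<Sum>v\<in>Y. ?c v) = 1"
      using base assms unfolding gf2_comb_def by simp_all
    then show ?case unfolding gf2_affine_hull_def by (auto intro!: exI[of _ ?c])
  next
    case (step a b c)
    then obtain ca cb cc where
      "a = gf2_comb Y ca" "(\<Sum>v\<in>Y. ca v) = 1" "b = gf2_comb Y cb" "(\<Sum>v\<in>Y. cb v) = 1"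
      "c = gf2_comb Y cc" "(\<Sum>v\<in>Y. cc v) = 1"
      unfolding gf2_affine_hull_def by blast
    then have "bsum3 a b c = gf2_comb Y (\<lambda>v. ca v + cb v + cc v)"
      "(\<Sum>v\<in>Y. ca v + cb v + cc v) = 1"
      unfolding bsum3_def gf2_comb_def by (simp_all add: sum.distrib distrib_right)
    then show ?case
      unfolding gf2_affine_hull_def by (auto intro!: exI[of _ "\<lambda>v. ca v + cb v + cc v"])
  qed
qed

lemma gf2_comb_drop:
  assumes "finite Y" "b \<in> Y" "c b = 1"
  shows "(\<Sum>v\<in>Y. (c(b := 0)) v) = (\<Sum>v\<in>Y. c v) + 1"
    and "gf2_comb Y c i = b i + gf2_comb Y (c(b := 0)) i"
proof -
  note remove_b = sum.remove[OF assms(1,2)]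
  have same_off_b: "(\<Sum>v\<in>Y - {b}. (c(b := 0)) v) = (\<Sum>v\<in>Y - {b}. c v)"
    "gf2_comb (Y - {b}) (c(b := 0)) = gf2_comb (Y - {b}) c"
    unfolding gf2_comb_def by (auto intro!: sum.cong)
  show "(\<Sum>v\<in>Y. (c(b := 0)) v) = (\<Sum>v\<in>Y. c v) + 1"
    using remove_b[of c] remove_b[of "c(b := 0)"] same_off_b assms(3)
    by (cases "\<Sum>v\<in>Y - {b}. c v") simp_all
  show "gf2_comb Y c i = b i + gf2_comb Y (c(b := 0)) i"
    using gf2_comb_remove[OF assms(1,2), of c i] gf2_comb_remove[OF assms(1,2), of "c(b := 0)" i]
      assms(3) same_off_b by simp
qed

lemma gf2_affine_hull_subset_ternary_closure:
  "finite Y \<Longrightarrow> (\<Sum>v\<in>Y. c v) = 1 \<Longrightarrow> gf2_comb Y c \<in> ternary_closure bsum3 Y"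
proof (induction Y arbitrary: c rule: finite_induct)
  case empty
  then show ?case by simp
next
  case (insert a Y)
  have mono: "ternary_closure bsum3 Y \<subseteq> ternary_closure bsum3 (insert a Y)"
    by (rule ternary_closure_mono) auto
  have a: "a \<in> ternary_closure bsum3 (insert a Y)" by (simp add: ternary_closure.base)
  have comb: "gf2_comb (insert a Y) c = (\<lambda>i. c a * a i + gf2_comb Y c i)"
    using insert.hyps unfolding gf2_comb_def by simp
  show ?case
  proof (cases "c a = 0")
    case True
    then show ?thesis using insert comb mono by auto
  next
    case False
    then have ca: "c a = 1" and sum_Y: "(\<Sum>v\<in>Y. c v) = 0"
      using insert by auto
    show ?thesis
    proof (cases "\<forall>v\<in>Y. c v = 0")
      case True
      then have "gf2_comb (insert a Y) c = a" using comb ca unfolding gf2_comb_def by simp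
      then show ?thesis using a by simp
    next
      case False
      then obtain b where b: "b \<in> Y" "c b = 1" by auto
      let ?c' = "c(b := 0)"
      have "(\<Sum>v\<in>Y. ?c' v) = 1" using gf2_comb_drop(1)[where c = c, OF insert.hyps(1) b] sum_Y by simp
      then have "gf2_comb Y ?c' \<in> ternary_closure bsum3 Y" by (rule insert.IH)
      then have rest: "gf2_comb Y ?c' \<in> ternary_closure bsum3 (insert a Y)" using mono by blast
      have "gf2_comb Y c i = b i + gf2_comb Y ?c' i" for i
        using gf2_comb_drop(2)[where c = c, OF insert.hyps(1) b] .
      then have "gf2_comb (insert a Y) c = bsum3 a b (gf2_comb Y ?c')"
        using comb ca unfolding bsum3_def by (simp add: add.assoc)
      moreover have "b \<in> ternary_closure bsum3 (insert a Y)"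
        using b(1) by (simp add: ternary_closure.base)
      ultimately show ?thesis using bsum3_closed a rest by simp
    qed
  qed
qed

lemma ternary_closure_bsum3:
  "finite Y \<Longrightarrow> ternary_closure bsum3 Y = gf2_affine_hull Y"
  using ternary_closure_subset_gf2_affine_hull gf2_affine_hull_subset_ternary_closure
  unfolding gf2_affine_hull_def by blast

lemma gf2_lin_indepD: "gf2_lin_indep Y \<Longrightarrow> (\<And>i. gf2_comb Y c i = 0) \<Longrightarrow> v \<in> Y \<Longrightarrow> c v = 0"
  unfolding gf2_lin_indep_def gf2_comb_def by blast

lemma notin_gf2_affine_hull_if_lin_indep:
  assumes "gf2_lin_indep Y" "y \<in> Y"
  shows "y \<notin> gf2_affine_hull (Y - {y})"
proof
  assume "y \<in> gf2_affine_hull (Y - {y})"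
  then obtain c where c: "y = gf2_comb (Y - {y}) c"
    unfolding gf2_affine_hull_def by blast
  have "gf2_comb (Y - {y}) (c(y := 1)) = gf2_comb (Y - {y}) c"
    unfolding gf2_comb_def by (auto intro!: sum.cong)
  then have "gf2_comb Y (c(y := 1)) i = 0" for i
    using gf2_comb_remove[OF _ assms(2), of "c(y := 1)" i] c assms(1)
    unfolding gf2_lin_indep_def by simp
  then have "(c(y := 1)) y = 0" by (rule gf2_lin_indepD[OF assms(1) _ assms(2)])
  then show False by simp
qed

text \<open>The first coordinate of a dependency sums its coefficients, so their sum vanishes.\<close>
lemma in_gf2_affine_hull_if_dependent:
  assumes "finite Y" "\<forall>v\<in>Y. v 0 = 1"
    and "y \<in> Y" "c y = 1" "\<And>i. gf2_comb Y c i = 0"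
  shows "y \<in> gf2_affine_hull (Y - {y})"
proof -
  have "(\<Sum>v\<in>Y. c v * v 0) = (\<Sum>v\<in>Y. c v)" using assms(2) by (intro sum.cong) auto
  then have "(\<Sum>v\<in>Y. c v) = 0" using assms(5)[of 0] unfolding gf2_comb_def by simp
  then have "(\<Sum>v\<in>Y - {y}. c v) = 1"
    using sum.remove[OF assms(1,3), of c] assms(4) by (cases "\<Sum>v\<in>Y - {y}. c v") simp_all
  moreover have "gf2_comb (Y - {y}) c = y"
  proof
    fix i
    have "y i + gf2_comb (Y - {y}) c i = 0"
      using assms(5)[of i] gf2_comb_remove[OF assms(1,3), of c i] assms(4) by simp
    then show "gf2_comb (Y - {y}) c i = y i"
      by (cases "y i"; cases "gf2_comb (Y - {y}) c i") simp_all
  qed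
  ultimately show ?thesis unfolding gf2_affine_hull_def by (auto intro!: exI[of _ c])
qed

lemma gf2_lin_indep_iff_affine_hull:
  assumes "finite Y" "\<forall>v\<in>Y. v 0 = 1"
  shows "gf2_lin_indep Y \<longleftrightarrow> (\<forall>y\<in>Y. y \<notin> gf2_affine_hull (Y - {y}))"
proof
  assume "gf2_lin_indep Y"
  then show "\<forall>y\<in>Y. y \<notin> gf2_affine_hull (Y - {y})"
    using notin_gf2_affine_hull_if_lin_indep by blast
next
  assume no_hull: "\<forall>y\<in>Y. y \<notin> gf2_affine_hull (Y - {y})"
  show "gf2_lin_indep Y"
    unfolding gf2_lin_indep_def
  proof (intro conjI assms(1) allI impI ballI)
    fix c :: "(nat \<Rightarrow> bit) \<Rightarrow> bit" and y
    assume "\<forall>i. (\<Sum>v\<in>Y. c v * v i) = 0" "y \<in> Y"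
    then show "c y = 0"
      using in_gf2_affine_hull_if_dependent[OF assms, of y c] no_hull unfolding gf2_comb_def
      by (cases "c y") auto
  qed
qed

definition ag_point :: "nat set \<Rightarrow> nat \<Rightarrow> bit" where
  "ag_point S = (\<lambda>i. if i = 0 \<or> i \<in> S then 1 else 0)"

lemma AG_ground_eq_image: "1 \<le> r \<Longrightarrow> AG_ground r = ag_point ` Pow {1..<r}"
proof (intro equalityI subsetI)
  fix v assume "v \<in> AG_ground r"
  have "v i = ag_point {i \<in> {1..<r}. v i = 1} i" for i
    using \<open>v \<in> AG_ground r\<close> unfolding AG_ground_def ag_point_def
    by (cases "v i"; cases "i < r"; cases "i = 0") auto
  then have "v = ag_point {i \<in> {1..<r}. v i = 1}" by blast
  then show "v \<in> ag_point ` Pow {1..<r}" by blast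
qed (auto simp: AG_ground_def ag_point_def)

lemma inj_on_ag_point: "inj_on ag_point {S. 0 \<notin> S}"
proof
  fix S T assume "S \<in> {S. 0 \<notin> S}" "T \<in> {S. 0 \<notin> S}" "ag_point S = ag_point T"
  then have "i \<in> S \<longleftrightarrow> i \<in> T" for i
    unfolding ag_point_def fun_eq_iff by (cases "i = 0") (auto dest: spec[of _ i] split: if_splits)
  then show "S = T" by blast
qed

lemma card_AG_ground:
  assumes "1 \<le> r"
  shows "card (AG_ground r) = 2 ^ (r - 1)"
proof -
  have "inj_on ag_point (Pow {1..<r})" by (rule inj_on_subset[OF inj_on_ag_point]) auto
  then show ?thesis using AG_ground_eq_image[OF assms] by (simp add: card_image card_Pow)
qed

lemma AG_ground_subset_ternary_closure:
  assumes "1 \<le> r"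
  shows "AG_ground r \<subseteq> ternary_closure bsum3 (insert (ag_point {}) ((\<lambda>j. ag_point {j}) ` {1..<r}))"
proof -
  let ?B = "insert (ag_point {}) ((\<lambda>j. ag_point {j}) ` {1..<r})"
  have "ag_point S \<in> ternary_closure bsum3 ?B" if "finite S" "S \<subseteq> {1..<r}" for S
    using that
  proof (induction S rule: finite_induct)
    case empty
    then show ?case by (simp add: ternary_closure.base)
  next
    case (insert j S)
    then have "ag_point (insert j S) = bsum3 (ag_point S) (ag_point {}) (ag_point {j})"
      unfolding ag_point_def bsum3_def by (auto simp: fun_eq_iff)
    moreover have "ag_point {} \<in> ternary_closure bsum3 ?B" "ag_point {j} \<in> ternary_closure bsum3 ?B"
      using insert.prems by (auto intro: ternary_closure.base)
    ultimately show ?case using insert bsum3_closed by simp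
  qed
  then show ?thesis using AG_ground_eq_image[OF assms] finite_subset[of _ "{1..<r}"] by auto
qed

section \<open>Coordinates\<close>

context claw_free_matroid
begin

lemma ternary_closure_subset_closure:
  assumes "S \<subseteq> E"
  shows "ternary_closure fourth_point S \<subseteq> cl S"
proof
  fix x assume "x \<in> ternary_closure fourth_point S"
  then show "x \<in> cl S"
  proof (induction rule: ternary_closure.induct)
    case (base x)
    then show ?case using subset_closure[OF assms] by blast
  next
    case (step a b c)
    then show ?case using fourth_point_in_flat[OF flat_closure, of a b c S] by simp
  qed
qed

end

context AG_extremal
begin

lemma closure_indep_subset_ternary_closure:
  "finite I \<Longrightarrow> indep I \<Longrightarrow> cl I \<subseteq> ternary_closure fourth_point I"
proof (induction I rule: finite_induct)
  case empty
  then show ?case using closure_empty by simp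
next
  case (insert x F)
  have x: "x \<in> E" and F: "indep F" "F \<subseteq> E"
    using insert.prems indep_subset_E indep_subset[of "insert x F" F] by auto
  have mono: "ternary_closure fourth_point F \<subseteq> ternary_closure fourth_point (insert x F)"
    by (rule ternary_closure_mono) auto
  have x_tc: "x \<in> ternary_closure fourth_point (insert x F)" by (simp add: ternary_closure.base)
  have IH: "cl F \<subseteq> ternary_closure fourth_point (insert x F)" using insert.IH[OF F(1)] mono by blast
  show ?case
  proof (cases "F = {}")
    case True
    then show ?thesis using closure_singleton[OF x] x_tc by simp
  next
    case False
    then obtain f0 where f0: "f0 \<in> F" by blast
    then have f0_cl: "f0 \<in> cl F" using subset_closure[OF F(2)] by blast
    have x_out: "x \<in> E - cl F" using in_closure_indep_iff[OF F(1) x] insert x by simp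
    have "cl (insert x F) = doubling (cl F) x f0"
      using closure_insert_closure[OF F(2) x] closure_insert_flat[OF flat_closure f0_cl x_out] by simp
    moreover have "fourth_point x f0 g \<in> ternary_closure fourth_point (insert x F)"
      if "g \<in> cl F - {f0}" for g
      using ternary_closure.step[OF x_tc, of f0 g] IH f0_cl that x_out by auto
    ultimately show ?thesis using IH x_tc unfolding doubling_def by auto
  qed
qed

lemma ternary_closure_fourth_point:
  assumes "S \<subseteq> E"
  shows "ternary_closure fourth_point S = cl S"
proof
  show "ternary_closure fourth_point S \<subseteq> cl S" by (rule ternary_closure_subset_closure[OF assms])
  obtain I where I: "basis_of S I" using basis_of_exists[of S] by blast
  then have "cl S = cl I" using closure_basis_of by simp
  also have "\<dots> \<subseteq> ternary_closure fourth_point I"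
    using closure_indep_subset_ternary_closure I indep_finite unfolding basis_of_def by blast
  also have "\<dots> \<subseteq> ternary_closure fourth_point S"
    using ternary_closure_mono I unfolding basis_of_def by blast
  finally show "cl S \<subseteq> ternary_closure fourth_point S" .
qed

definition coord :: "(nat \<Rightarrow> 'a) \<Rightarrow> 'a \<Rightarrow> nat \<Rightarrow> bit" where
  "coord bs x i = (if i = 0 then 1 else if i < r then side (cl (bs ` ({0..<r} - {i}))) x else 0)"

context
  fixes bs :: "nat \<Rightarrow> 'a"
  assumes inj_bs: "inj_on bs {0..<r}" and indep_bs: "indep (bs ` {0..<r})"
begin

lemma basis_bs: "basis_of E (bs ` {0..<r})"
  using indep_bs indep_subset_E card_image[OF inj_bs] rank_E unfolding basis_of_def by simp

lemma indep_bs_remove: "indep (bs ` ({0..<r} - {i}))"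
  by (rule indep_subset[OF indep_bs]) auto

lemma coordinate_hyperplane:
  assumes "i < r"
  shows "flat E indep (cl (bs ` ({0..<r} - {i})))" "rank (cl (bs ` ({0..<r} - {i}))) = r - 1"
proof -
  have "card (bs ` ({0..<r} - {i})) = r - 1"
    using card_image[OF inj_on_subset[OF inj_bs]] assms by simp
  then show "rank (cl (bs ` ({0..<r} - {i}))) = r - 1"
    using rank_closure rank_indep[OF indep_bs_remove] by simp
qed (rule flat_closure)

lemma basis_in_coordinate_hyperplane:
  assumes "i < r" "j < r"
  shows "bs j \<in> cl (bs ` ({0..<r} - {i})) \<longleftrightarrow> j \<noteq> i"
proof
  assume j: "bs j \<in> cl (bs ` ({0..<r} - {i}))"
  show "j \<noteq> i"
  proof
    assume "j = i"
    have "bs i \<in> E" using indep_subset_E[OF indep_bs] assms by auto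
    moreover have "bs i \<notin> bs ` ({0..<r} - {i})"
      using inj_on_image_mem_iff[OF inj_bs, of i "{0..<r} - {i}"] assms by auto
    moreover have "insert (bs i) (bs ` ({0..<r} - {i})) = bs ` {0..<r}" using assms by auto
    ultimately show False
      using in_closure_indep_iff[OF indep_bs_remove, of "bs i" i] indep_bs j \<open>j = i\<close> by simp
  qed
next
  assume "j \<noteq> i"
  then show "bs j \<in> cl (bs ` ({0..<r} - {i}))"
    using subset_closure[of "bs ` ({0..<r} - {i})"] indep_subset_E[OF indep_bs_remove] assms by auto
qed

lemma coord_fourth_point:
  assumes "{a, b, c} \<subseteq> E" "distinct [a, b, c]"
  shows "coord bs (fourth_point a b c) = bsum3 (coord bs a) (coord bs b) (coord bs c)"
  using side_fourth_point[OF coordinate_hyperplane assms]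
  unfolding coord_def bsum3_def by (auto simp: fun_eq_iff)

lemma coord_in_AG_ground: "coord bs x \<in> AG_ground r"
  using rank_E_pos unfolding coord_def AG_ground_def by simp

lemma coord_basis: "coord bs (bs 0) = ag_point {}" "j \<in> {1..<r} \<Longrightarrow> coord bs (bs j) = ag_point {j}"
  using basis_in_coordinate_hyperplane rank_E_pos
  unfolding coord_def ag_point_def side_def by (auto simp: fun_eq_iff)

lemma image_coord_closure:
  assumes "S \<subseteq> E"
  shows "coord bs ` cl S = ternary_closure bsum3 (coord bs ` S)"
proof -
  have sub: "ternary_closure fourth_point S \<subseteq> E"
    using ternary_closure_fourth_point[OF assms] closure_subset_E by simp
  have "coord bs ` ternary_closure fourth_point S = ternary_closure bsum3 (coord bs ` S)"
  proof (rule image_ternary_closure)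
    fix a b c
    assume "a \<in> ternary_closure fourth_point S" "b \<in> ternary_closure fourth_point S"
      "c \<in> ternary_closure fourth_point S" "distinct [a, b, c]"
    then show "coord bs (fourth_point a b c) = bsum3 (coord bs a) (coord bs b) (coord bs c)"
      using sub by (intro coord_fourth_point) auto
  qed (rule bsum3_closed)
  then show ?thesis using ternary_closure_fourth_point[OF assms] by simp
qed

lemma image_coord_E: "coord bs ` E = AG_ground r"
proof
  show "coord bs ` E \<subseteq> AG_ground r" using coord_in_AG_ground by blast
  have E: "cl (bs ` {0..<r}) = E"
    using closure_basis_of[OF basis_bs] closure_flat[OF flat_E] by simp
  have "bs 0 \<in> bs ` {0..<r}" using rank_E_pos by simp
  then have "ag_point {} \<in> coord bs ` bs ` {0..<r}" using coord_basis(1) by (metis image_eqI)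
  moreover have "ag_point {j} \<in> coord bs ` bs ` {0..<r}" if "j \<in> {1..<r}" for j
  proof -
    have "bs j \<in> bs ` {0..<r}" using that by simp
    then show ?thesis using coord_basis(2)[OF that] by (metis image_eqI)
  qed
  ultimately have "insert (ag_point {}) ((\<lambda>j. ag_point {j}) ` {1..<r}) \<subseteq> coord bs ` bs ` {0..<r}"
    by blast
  from ternary_closure_mono[OF this]
  have "AG_ground r \<subseteq> ternary_closure bsum3 (coord bs ` bs ` {0..<r})"
    using AG_ground_subset_ternary_closure[OF rank_E_pos] by (rule order_trans[rotated])
  also have "\<dots> = coord bs ` E"
    using image_coord_closure[of "bs ` {0..<r}"] indep_subset_E[OF indep_bs] E by simp
  finally show "AG_ground r \<subseteq> coord bs ` E" .
qed

lemma inj_on_coord: "inj_on (coord bs) E"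
proof (rule eq_card_imp_inj_on[OF finite_E])
  show "card (coord bs ` E) = card E"
    using image_coord_E card_AG_ground[OF rank_E_pos] card_E by simp
qed

lemma indep_iff_AG_indep:
  assumes "X \<subseteq> E"
  shows "indep X \<longleftrightarrow> AG_indep r (coord bs ` X)"
proof -
  have fin: "finite X" using assms finite_E finite_subset by blast
  have hull: "coord bs ` cl (X - {x}) = gf2_affine_hull (coord bs ` X - {coord bs x})"
    if "x \<in> X" for x
  proof -
    have "coord bs ` (X - {x}) = coord bs ` X - {coord bs x}"
      using inj_on_image_set_diff[OF inj_on_coord, of X "{x}"] assms that by auto
    then show ?thesis
      using image_coord_closure[of "X - {x}"] ternary_closure_bsum3[of "coord bs ` (X - {x})"] fin assms
      by auto
  qed
  have mem: "x \<in> cl (X - {x}) \<longleftrightarrow> coord bs x \<in> coord bs ` cl (X - {x})" if "x \<in> X" for x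
    using inj_on_image_mem_iff[OF inj_on_coord _ closure_subset_E, of x] that assms by auto
  have "indep X \<longleftrightarrow> (\<forall>x\<in>X. x \<notin> cl (X - {x}))" by (rule indep_iff_notin_closure[OF assms])
  also have "\<dots> \<longleftrightarrow> (\<forall>x\<in>X. coord bs x \<notin> gf2_affine_hull (coord bs ` X - {coord bs x}))"
    using mem hull by simp
  also have "\<dots> \<longleftrightarrow> (\<forall>y\<in>coord bs ` X. y \<notin> gf2_affine_hull (coord bs ` X - {y}))"
    by simp
  also have "\<dots> \<longleftrightarrow> gf2_lin_indep (coord bs ` X)"
    using gf2_lin_indep_iff_affine_hull[of "coord bs ` X"] fin coord_in_AG_ground
    unfolding AG_ground_def by auto
  finally show ?thesis using coord_in_AG_ground unfolding AG_indep_def by auto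
qed

end

lemma matroid_iso_AG: "matroid_iso E indep (AG_ground r) (AG_indep r)"
proof -
  obtain B where B: "basis_of E B" using basis_of_exists[of E] by blast
  then obtain bs where bs: "bij_betw bs {0..<r} B"
    using ex_bij_betw_nat_finite[of B] indep_finite rank_E unfolding basis_of_def by auto
  then have "inj_on bs {0..<r}" "indep (bs ` {0..<r})"
    using B unfolding bij_betw_def basis_of_def by auto
  then show ?thesis
    unfolding matroid_iso_def bij_betw_def using inj_on_coord image_coord_E indep_iff_AG_indep by blast
qed

end

theorem lemma3p4:
  fixes E :: "'a set" and indep :: "'a set \<Rightarrow> bool" and r :: nat
  assumes "matroid E indep"
    and "simple_matroid E indep"
    and "mrank indep E = r"
    and "r \<ge> 1"
    and "\<not> (\<exists>C. circuit E indep C \<and> card C = 3)"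
    and "\<not> (\<exists>X. claw E indep X \<and> card X = 3)"
  shows "card E \<ge> 2 ^ (r - 1) \<and>
         (card E = 2 ^ (r - 1) \<longrightarrow> matroid_iso E indep (AG_ground r) (AG_indep r))"
proof -
  interpret finite_matroid E indep by unfold_locales (fact assms(1))
  have "3 < card C" if "circuit E indep C" for C
    using assms(2,5) that unfolding simple_matroid_def by fastforce
  then interpret claw_free_matroid E indep
    using indep_if_circuits_larger assms(6) by unfold_locales blast+
  have "E \<noteq> {}" using assms(3,4) rank_indep[OF indep_empty] by auto
  then have "2 ^ (r - 1) \<le> card E" using card_flat_ge[OF flat_E] assms(3) by simp
  moreover have "matroid_iso E indep (AG_ground r) (AG_indep r)" if "card E = 2 ^ (r - 1)"
  proof -
    interpret AG_extremal E indep r by unfold_locales (use assms(3) that in auto)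
    show ?thesis by (rule matroid_iso_AG)
  qed
  ultimately show ?thesis by simp
qed

end
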